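(* Let $\varepsilon\in\mathbb{R}^p$ be a random vector with mean $0$ and variance $\Delta>0$, let $W\in\mathbb{R}^{p\times p}$ be symmetric positive semidefinite, and consider the conditions (W.1) $E(\varepsilon^TW\varepsilon)=O(p)$ and (W.2) $\operatorname{var}(\varepsilon^TW\varepsilon)=O(p^2)$ as $p\to\infty$. Let $\epsilon=(\epsilon_i)=\Delta^{-1/2}\varepsilon$ (so $E(\epsilon)=0$, $\operatorname{var}(\epsilon)=I_p$) and $\phi_{ij}=E(\epsilon_i^2\epsilon_j^2)$, $i,j=1,\dots,p$. Then: (i) If $\varepsilon\sim N(0,\Delta)$, then (W.1) implies (W.2). (ii) If $W=\Delta^{-1}$ and $\phi_{ij}\le\phi<\infty$ for all $i,j$ as $p\to\infty$, then (W.2) holds. (iii) If (a) the elements $\epsilon_i$ of $\epsilon$ have symmetric distributions or are independent, and (b) $\phi_{ij}\le\phi<\infty$ for all $i,j$ as $p\to\infty$, then (W.1) implies (W.2).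
   Context: All quantities are indexed by $p$, with $p\to\infty$; $\phi$ is a constant not depending on $p$. *)

theory Defs
  imports "HOL-Probability.Probability" "HOL-Library.Landau_Symbols"
begin

text \<open>p x p real matrices are represented as functions nat => nat => real, only the
  entries with indices below p being relevant; vectors in R^p as nat => _ on indices below p.\<close>

definition qform :: "nat \<Rightarrow> (nat \<Rightarrow> nat \<Rightarrow> real) \<Rightarrow> (nat \<Rightarrow> real) \<Rightarrow> real" where
  "qform p A a = (\<Sum>i<p. \<Sum>j<p. a i * A i j * a j)"

definition sym_mat :: "nat \<Rightarrow> (nat \<Rightarrow> nat \<Rightarrow> real) \<Rightarrow> bool" where
  "sym_mat p A \<longleftrightarrow> (\<forall>i<p. \<forall>j<p. A i j = A j i)"

definition psd_mat :: "nat \<Rightarrow> (nat \<Rightarrow> nat \<Rightarrow> real) \<Rightarrow> bool" where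
  "psd_mat p A \<longleftrightarrow> sym_mat p A \<and> (\<forall>a. qform p A a \<ge> 0)"

definition pd_mat :: "nat \<Rightarrow> (nat \<Rightarrow> nat \<Rightarrow> real) \<Rightarrow> bool" where
  "pd_mat p A \<longleftrightarrow> sym_mat p A \<and> (\<forall>a. (\<exists>i<p. a i \<noteq> 0) \<longrightarrow> qform p A a > 0)"

definition mat_mult :: "nat \<Rightarrow> (nat \<Rightarrow> nat \<Rightarrow> real) \<Rightarrow> (nat \<Rightarrow> nat \<Rightarrow> real) \<Rightarrow> (nat \<Rightarrow> nat \<Rightarrow> real)" where
  "mat_mult p A B = (\<lambda>i j. \<Sum>k<p. A i k * B k j)"

definition is_id_mat :: "nat \<Rightarrow> (nat \<Rightarrow> nat \<Rightarrow> real) \<Rightarrow> bool" where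
  "is_id_mat p A \<longleftrightarrow> (\<forall>i<p. \<forall>j<p. A i j = (if i = j then 1 else 0))"

text \<open>B is the inverse of A (for square matrices a one-sided inverse is two-sided).\<close>
definition is_inverse_mat :: "nat \<Rightarrow> (nat \<Rightarrow> nat \<Rightarrow> real) \<Rightarrow> (nat \<Rightarrow> nat \<Rightarrow> real) \<Rightarrow> bool" where
  "is_inverse_mat p B A \<longleftrightarrow> is_id_mat p (mat_mult p B A)"

text \<open>S = D^(-1/2), the symmetric positive definite inverse square root of a positive
  definite D: the unique symmetric positive definite S with S D S = I.\<close>
definition is_inv_sqrt :: "nat \<Rightarrow> (nat \<Rightarrow> nat \<Rightarrow> real) \<Rightarrow> (nat \<Rightarrow> nat \<Rightarrow> real) \<Rightarrow> bool" where
  "is_inv_sqrt p D S \<longleftrightarrow> pd_mat p S \<and> is_id_mat p (mat_mult p (mat_mult p S D) S)"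

text \<open>X = (X_0,...,X_{p-1}) is jointly Gaussian with mean 0 and covariance D:
  every linear combination a^T X is N(0, a^T D a) (degenerate at 0 if a^T D a = 0).\<close>
definition mvnormal :: "'a measure \<Rightarrow> nat \<Rightarrow> (nat \<Rightarrow> 'a \<Rightarrow> real) \<Rightarrow> (nat \<Rightarrow> nat \<Rightarrow> real) \<Rightarrow> bool" where
  "mvnormal M p X D \<longleftrightarrow> (\<forall>a.
     (if qform p D a > 0
      then distributed M lborel (\<lambda>\<omega>. \<Sum>i<p. a i * X i \<omega>)
             (\<lambda>x. ennreal (normal_density 0 (sqrt (qform p D a)) x))
      else (AE \<omega> in M. (\<Sum>i<p. a i * X i \<omega>) = 0)))"

definition qrv :: "nat \<Rightarrow> (nat \<Rightarrow> nat \<Rightarrow> real) \<Rightarrow> (nat \<Rightarrow> 'a \<Rightarrow> real) \<Rightarrow> 'a \<Rightarrow> real" where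
  "qrv p W X = (\<lambda>\<omega>. \<Sum>i<p. \<Sum>j<p. X i \<omega> * W i j * X j \<omega>)"

definition stdz :: "nat \<Rightarrow> (nat \<Rightarrow> nat \<Rightarrow> real) \<Rightarrow> (nat \<Rightarrow> 'a \<Rightarrow> real) \<Rightarrow> nat \<Rightarrow> 'a \<Rightarrow> real" where
  "stdz p S X = (\<lambda>i \<omega>. \<Sum>k<p. S i k * X k \<omega>)"

definition W1 :: "(nat \<Rightarrow> 'a measure) \<Rightarrow> (nat \<Rightarrow> 'a \<Rightarrow> real) \<Rightarrow> bool" where
  "W1 M Q \<longleftrightarrow> (\<lambda>p. integral\<^sup>L (M p) (Q p)) \<in> O(\<lambda>p. real p)"

text \<open>var(Q) = O(p^2); finiteness of the variance (Q square integrable) is made explicit.\<close>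
definition W2 :: "(nat \<Rightarrow> 'a measure) \<Rightarrow> (nat \<Rightarrow> 'a \<Rightarrow> real) \<Rightarrow> bool" where
  "W2 M Q \<longleftrightarrow> (\<forall>\<^sub>F p in sequentially. integrable (M p) (\<lambda>\<omega>. (Q p \<omega>)\<^sup>2)) \<and>
     (\<lambda>p. integral\<^sup>L (M p) (\<lambda>\<omega>. (Q p \<omega> - integral\<^sup>L (M p) (Q p))\<^sup>2)) \<in> O(\<lambda>p. (real p)\<^sup>2)"

definition fourth_bounded :: "'a measure \<Rightarrow> nat \<Rightarrow> (nat \<Rightarrow> 'a \<Rightarrow> real) \<Rightarrow> real \<Rightarrow> bool" where
  "fourth_bounded M p e phi \<longleftrightarrow> (\<forall>i<p. \<forall>j<p.
     integrable M (\<lambda>\<omega>. (e i \<omega>)\<^sup>2 * (e j \<omega>)\<^sup>2) \<and>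
     integral\<^sup>L M (\<lambda>\<omega>. (e i \<omega>)\<^sup>2 * (e j \<omega>)\<^sup>2) \<le> phi)"

text \<open>The components of e have symmetric distributions, in the joint sense: the law of
  (e_0,...,e_{p-1}) is invariant under changing the sign of any single component.\<close>
definition sign_symmetric :: "'a measure \<Rightarrow> nat \<Rightarrow> (nat \<Rightarrow> 'a \<Rightarrow> real) \<Rightarrow> bool" where
  "sign_symmetric M p e \<longleftrightarrow> (\<forall>k<p.
     distr M (PiM {..<p} (\<lambda>_. borel)) (\<lambda>\<omega>. \<lambda>i\<in>{..<p}. e i \<omega>) =
     distr M (PiM {..<p} (\<lambda>_. borel)) (\<lambda>\<omega>. \<lambda>i\<in>{..<p}. if i = k then - e i \<omega> else e i \<omega>))"

end

theory Submission
  imports Defs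
begin

text \<open>Factor W = U^T U, which is possible for every positive semidefinite matrix, so that
  eps^T W eps = sum_k Y_k^2 with Y_k = (U eps)_k.  If every Y_k has kurtosis at most C, i.e.
  E Y_k^4 <= C (E Y_k^2)^2, then E (Y_k^2 Y_l^2) <= C E Y_k^2 E Y_l^2, and summing gives
  var (eps^T W eps) <= E (eps^T W eps)^2 <= C (E eps^T W eps)^2 = O(p^2) under (W.1).
  For Gaussian eps every Y_k has kurtosis 3, which is (i).  In (ii), W = Delta^-1 = S S with
  S = Delta^(-1/2), so eps^T W eps = sum_k e_k^2 for the standardized vector e = S eps; then
  E eps^T W eps = p, so (W.1) holds automatically, and E e_k^4 <= phi.  In (iii) every Y_k is
  a linear combination sum_m w_m e_m, and symmetry or independence makes E (e_i e_j e_k e_l)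
  vanish unless the indices pair up; the three pairings give E Y_k^4 <= 3 phi (E Y_k^2)^2.\<close>

section \<open>Gram factorisation of positive semidefinite matrices\<close>

lemma sum_kronecker_mult:
  "finite A \<Longrightarrow> (\<Sum>k\<in>A. (if k = i then 1 else 0) * f k) = (if i \<in> A then f i else (0::'b::semiring_1))"
  by (simp add: if_distrib[where f="\<lambda>x. x * f _"] cong: if_cong)

lemma qform_cong: "(\<And>i. i < n \<Longrightarrow> a i = b i) \<Longrightarrow> qform n W a = qform n W b"
  unfolding qform_def by (intro sum.cong refl) auto

lemma qform_Suc:
  assumes "sym_mat (Suc n) W"
  shows "qform (Suc n) W a = qform n W a + 2 * a n * (\<Sum>i<n. a i * W i n) + (a n)\<^sup>2 * W n n"
proof -
  have sym: "\<And>j. j < n \<Longrightarrow> W n j = W j n" using assms unfolding sym_mat_def by auto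
  have "qform (Suc n) W a = qform n W a + (\<Sum>i<n. a i * W i n * a n) + (\<Sum>j<n. a n * W n j * a j)
      + a n * W n n * a n"
    unfolding qform_def by (simp add: sum.distrib)
  also have "(\<Sum>j<n. a n * W n j * a j) = (\<Sum>i<n. a i * W i n * a n)"
    by (intro sum.cong refl) (simp add: sym)
  also have "(\<Sum>i<n. a i * W i n * a n) = a n * (\<Sum>i<n. a i * W i n)"
    by (simp add: sum_distrib_left mult_ac)
  finally show ?thesis by (simp add: power2_eq_square mult_ac)
qed

lemma qform_unit_vector: "i < n \<Longrightarrow> qform n W (\<lambda>j. if j = i then 1 else 0) = W i i"
  unfolding qform_def by (simp add: sum_kronecker_mult mult.commute[of _ "if _ then _ else _"])

lemma psd_mat_diag_nonneg: "psd_mat n W \<Longrightarrow> i < n \<Longrightarrow> W i i \<ge> 0"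
  using qform_unit_vector[of i n W] unfolding psd_mat_def by metis

text \<open>At the vector e_i + t e_n the form equals W i i + 2 t W i n, which is negative for a
  suitable t unless W i n = 0.\<close>
lemma psd_mat_zero_diag_imp_zero:
  assumes psd: "psd_mat (Suc n) W" and "W n n = 0" and i: "i < n"
  shows "W i n = 0"
proof (rule ccontr)
  assume ne: "W i n \<noteq> 0"
  define t where "t = - (W i i + 1) / (2 * W i n)"
  define a where "a = (\<lambda>j. if j = i then 1 else 0::real)"
  have "qform (Suc n) W (a(n := t)) = qform n W a + 2 * t * (\<Sum>k<n. (a(n:=t)) k * W k n)"
    using qform_Suc[of n W "a(n := t)"] qform_cong[of n "a(n := t)" a W] psd \<open>W n n = 0\<close>
    unfolding psd_mat_def by simp
  also have "(\<Sum>k<n. (a(n:=t)) k * W k n) = W i n"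
    using i by (simp add: a_def sum_kronecker_mult)
  also have "qform n W a = W i i"
    unfolding a_def using i by (rule qform_unit_vector)
  also have "W i i + 2 * t * W i n = -1"
    unfolding t_def using ne by (simp add: field_simps)
  finally show False using psd unfolding psd_mat_def by (metis neg_0_le_iff_le not_one_le_zero)
qed

text \<open>If W n n = 0 the correction term vanishes (division by zero gives 0), which is
  right because then the whole last column of W vanishes.\<close>
lemma psd_mat_schur_complement:
  assumes psd: "psd_mat (Suc n) W"
  shows "psd_mat n (\<lambda>i j. W i j - W i n * W j n / W n n)"
  unfolding psd_mat_def
proof
  have sym: "sym_mat (Suc n) W" using psd unfolding psd_mat_def by simp
  then show "sym_mat n (\<lambda>i j. W i j - W i n * W j n / W n n)"
    unfolding sym_mat_def by (auto simp: mult.commute)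
  show "\<forall>a. 0 \<le> qform n (\<lambda>i j. W i j - W i n * W j n / W n n) a"
  proof
    fix a
    define b where "b = (\<Sum>i<n. a i * W i n)"
    define t where "t = - b / W n n"
    have "qform n (\<lambda>i j. W i j - W i n * W j n / W n n) a = qform n W a - b\<^sup>2 / W n n"
      unfolding qform_def b_def
      by (simp add: algebra_simps sum_subtractf power2_eq_square sum_product sum_divide_distrib)
    also have "\<dots> = qform (Suc n) W (a(n := t))"
      using qform_Suc[OF sym, of "a(n := t)"] qform_cong[of n "a(n := t)" a W]
      unfolding t_def b_def by (cases "W n n = 0") (simp_all add: field_simps power2_eq_square)
    also have "\<dots> \<ge> 0" using psd unfolding psd_mat_def by simp
    finally show "0 \<le> qform n (\<lambda>i j. W i j - W i n * W j n / W n n) a" .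
  qed
qed

text \<open>Induction on n: split off the rank-one matrix v v^T with v = (last column) / sqrt (W n n);
  what remains is the Schur complement, which is positive semidefinite on the first n indices.\<close>
lemma psd_mat_gram:
  "psd_mat n W \<Longrightarrow> \<exists>U. \<forall>i<n. \<forall>j<n. W i j = (\<Sum>k<n. U k i * U k j)"
proof (induction n arbitrary: W)
  case 0
  then show ?case by simp
next
  case (Suc n)
  define v where "v i = W i n / sqrt (W n n)" for i
  have "W n n \<ge> 0" using psd_mat_diag_nonneg[OF Suc.prems] by simp
  then have col: "W i n = v i * v n" if "i < Suc n" for i
    using psd_mat_zero_diag_imp_zero[OF Suc.prems, of i] that
    unfolding v_def by (cases "i = n") (auto simp: real_sqrt_mult[symmetric] power2_eq_square)
  have schur: "W i j - W i n * W j n / W n n = W i j - v i * v j" for i j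
    using \<open>W n n \<ge> 0\<close> unfolding v_def by (simp add: real_sqrt_mult[symmetric] power2_eq_square)
  obtain U where U: "\<And>i j. i < n \<Longrightarrow> j < n \<Longrightarrow> W i j - v i * v j = (\<Sum>k<n. U k i * U k j)"
    using Suc.IH[OF psd_mat_schur_complement[OF Suc.prems]] unfolding schur by blast
  define U' where "U' k i = (if k < n then (if i < n then U k i else 0) else v i)" for k i
  have sym: "W i j = W j i" if "i < Suc n" "j < Suc n" for i j
    using Suc.prems that unfolding psd_mat_def sym_mat_def by blast
  have "W i j = (\<Sum>k<Suc n. U' k i * U' k j)" if ij: "i < Suc n" "j < Suc n" for i j
  proof (cases "i < n \<and> j < n")
    case True
    then show ?thesis using U[of i j] unfolding U'_def by simp
  next
    case False
    then have "i = n \<or> j = n" using ij by auto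
    then show ?thesis using col ij sym[OF ij] unfolding U'_def by (auto simp: mult.commute)
  qed
  then show ?case by blast
qed

lemma sum_sum_gram_eq_sum_squares:
  fixes U :: "nat \<Rightarrow> nat \<Rightarrow> real"
  assumes "\<And>i j. i < n \<Longrightarrow> j < n \<Longrightarrow> W i j = (\<Sum>k<n. U k i * U k j)"
  shows "(\<Sum>i<n. \<Sum>j<n. x i * W i j * x j) = (\<Sum>k<n. (\<Sum>i<n. U k i * x i)\<^sup>2)"
proof -
  have "(\<Sum>i<n. \<Sum>j<n. x i * W i j * x j) = (\<Sum>i<n. \<Sum>j<n. \<Sum>k<n. x i * U k i * U k j * x j)"
    using assms by (simp add: sum_distrib_left sum_distrib_right mult.assoc)
  also have "\<dots> = (\<Sum>k<n. \<Sum>i<n. \<Sum>j<n. x i * U k i * U k j * x j)"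
    by (subst sum.swap) (rule sum.cong[OF refl], rule sum.swap)
  also have "\<dots> = (\<Sum>k<n. (\<Sum>i<n. U k i * x i)\<^sup>2)"
    by (simp add: power2_eq_square sum_product mult_ac)
  finally show ?thesis .
qed

lemma qrv_eq_sum_squares:
  assumes "\<And>i j. i < p \<Longrightarrow> j < p \<Longrightarrow> W i j = (\<Sum>k<p. U k i * U k j)"
  shows "qrv p W X = (\<lambda>\<omega>. \<Sum>k<p. (\<Sum>i<p. U k i * X i \<omega>)\<^sup>2)"
  unfolding qrv_def using sum_sum_gram_eq_sum_squares[OF assms] by simp

section \<open>Matrix products and the inverse square root\<close>

lemma mat_mult_assoc: "mat_mult p (mat_mult p A B) C = mat_mult p A (mat_mult p B C)"
  unfolding mat_mult_def
  by (intro ext) (simp add: sum_distrib_left sum_distrib_right mult.assoc, rule sum.swap)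

lemma mat_mult_vec_assoc:
  "(\<Sum>k<p. mat_mult p A B i k * x k) = (\<Sum>m<p. A i m * (\<Sum>k<p. B m k * x k))"
  unfolding mat_mult_def
  by (simp add: sum_distrib_left sum_distrib_right mult.assoc, rule sum.swap)

lemma mat_mult_id_left: "is_id_mat p I \<Longrightarrow> i < p \<Longrightarrow> mat_mult p I B i j = B i j"
  unfolding is_id_mat_def mat_mult_def
  by (simp add: if_distrib[where f="\<lambda>x. x * B _ j"] cong: if_cong)

lemma mat_mult_id_right: "is_id_mat p I \<Longrightarrow> j < p \<Longrightarrow> mat_mult p A I i j = A i j"
  unfolding is_id_mat_def mat_mult_def
  by (simp add: if_distrib[where f="\<lambda>x. A i _ * x"] cong: if_cong)

lemma id_mat_vec: "is_id_mat p I \<Longrightarrow> i < p \<Longrightarrow> (\<Sum>k<p. I i k * x k) = x i"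
  using mat_mult_id_left[where B="\<lambda>k _. x k"] unfolding mat_mult_def by simp

lemma pd_mat_vec_eq_0:
  assumes "pd_mat p S" "\<And>i. i < p \<Longrightarrow> (\<Sum>k<p. S i k * x k) = 0" "i < p"
  shows "x i = 0"
proof (rule ccontr)
  assume "x i \<noteq> 0"
  then have "qform p S x > 0" using assms(1,3) unfolding pd_mat_def by blast
  moreover have "qform p S x = (\<Sum>i<p. x i * (\<Sum>k<p. S i k * x k))"
    unfolding qform_def by (simp add: sum_distrib_left mult.assoc)
  ultimately show False using assms(2) by simp
qed

lemma inv_sqrt_sym: "is_inv_sqrt p D S \<Longrightarrow> i < p \<Longrightarrow> j < p \<Longrightarrow> S i j = S j i"
  unfolding is_inv_sqrt_def pd_mat_def sym_mat_def by auto

text \<open>S (D S S) = (S D S) S = S, and S is injective, being positive definite.\<close>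
lemma inv_sqrt_right_inverse:
  assumes S: "is_inv_sqrt p D S"
  shows "is_id_mat p (mat_mult p D (mat_mult p S S))"
  unfolding is_id_mat_def
proof (intro allI impI)
  fix i j assume i: "i < p" and j: "j < p"
  let ?T = "mat_mult p D (mat_mult p S S)"
  have SDS: "is_id_mat p (mat_mult p (mat_mult p S D) S)" using S unfolding is_inv_sqrt_def by simp
  have "(\<Sum>k<p. S r k * (?T k j - (if k = j then 1 else 0))) = 0" if r: "r < p" for r
  proof -
    have "(\<Sum>k<p. S r k * ?T k j) = mat_mult p S ?T r j"
      by (simp add: mat_mult_def)
    also have "\<dots> = mat_mult p (mat_mult p (mat_mult p S D) S) S r j"
      by (simp add: mat_mult_assoc)
    also have "\<dots> = S r j" using SDS r by (rule mat_mult_id_left)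
    also have "\<dots> = (\<Sum>k<p. S r k * (if k = j then 1 else 0))"
      using j by (simp add: if_distrib[where f="\<lambda>x. S r _ * x"] cong: if_cong)
    finally show ?thesis by (simp add: right_diff_distrib sum_subtractf)
  qed
  then have "?T i j - (if i = j then 1 else 0) = 0"
    using pd_mat_vec_eq_0[of p S "\<lambda>k. ?T k j - (if k = j then 1 else 0)"] S i
    unfolding is_inv_sqrt_def by blast
  then show "?T i j = (if i = j then 1 else 0)" by simp
qed

lemma inverse_mat_eq_gram_inv_sqrt:
  assumes S: "is_inv_sqrt p D S" and W: "is_inverse_mat p W D" and ij: "i < p" "j < p"
  shows "W i j = (\<Sum>k<p. S k i * S k j)"
proof -
  have "W i j = mat_mult p W (mat_mult p D (mat_mult p S S)) i j"
    using inv_sqrt_right_inverse[OF S] ij by (simp add: mat_mult_id_right)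
  also have "\<dots> = mat_mult p (mat_mult p W D) (mat_mult p S S) i j"
    by (simp add: mat_mult_assoc)
  also have "\<dots> = mat_mult p S S i j"
    using W ij unfolding is_inverse_mat_def by (simp add: mat_mult_id_left)
  also have "\<dots> = (\<Sum>k<p. S k i * S k j)"
    unfolding mat_mult_def using inv_sqrt_sym[OF S] ij by (intro sum.cong refl) simp
  finally show ?thesis .
qed

lemma inv_sqrt_reconstruct:
  assumes S: "is_inv_sqrt p D S" and i: "i < p"
  shows "x i = (\<Sum>k<p. mat_mult p D S i k * (\<Sum>j<p. S k j * x j))"
proof -
  have "(\<Sum>k<p. mat_mult p D S i k * (\<Sum>j<p. S k j * x j))
      = (\<Sum>j<p. mat_mult p D (mat_mult p S S) i j * x j)"
    by (simp add: mat_mult_vec_assoc[symmetric] mat_mult_assoc)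
  also have "\<dots> = x i" using inv_sqrt_right_inverse[OF S] i by (rule id_mat_vec)
  finally show ?thesis by simp
qed

lemma inv_sqrt_cov:
  assumes S: "is_inv_sqrt p D S" and ij: "i < p" "j < p"
  shows "(\<Sum>a<p. \<Sum>b<p. S i a * S j b * D a b) = (if i = j then 1 else 0)"
proof -
  have "(\<Sum>a<p. \<Sum>b<p. S i a * S j b * D a b) = (\<Sum>b<p. \<Sum>a<p. S i a * S j b * D a b)"
    by (rule sum.swap)
  also have "\<dots> = mat_mult p (mat_mult p S D) S i j"
    unfolding mat_mult_def using inv_sqrt_sym[OF S _ ij(2)]
    by (intro sum.cong refl) (simp add: sum_distrib_left sum_distrib_right mult_ac)
  finally show ?thesis using S ij unfolding is_inv_sqrt_def is_id_mat_def by simp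
qed

section \<open>Kurtosis bounds and the variance of a sum of squares\<close>

lemma abs_mult_le_sq_add_sq: "\<bar>x * y\<bar> \<le> x\<^sup>2 + (y::real)\<^sup>2"
proof -
  have "2 * (\<bar>x\<bar> * \<bar>y\<bar>) \<le> x\<^sup>2 + y\<^sup>2"
    using sum_squares_bound[of "\<bar>x\<bar>" "\<bar>y\<bar>"] by (simp add: mult.assoc)
  moreover have "0 \<le> \<bar>x\<bar> * \<bar>y\<bar>" by simp
  ultimately show ?thesis unfolding abs_mult by linarith
qed

lemma sq_mult_sq_le_weighted:
  assumes "t > 0"
  shows "x\<^sup>2 * y\<^sup>2 \<le> (t * x^4 + y^4 / t) / (2::real)"
proof -
  have "(t * x^4 + y^4 / t) / 2 - x\<^sup>2 * y\<^sup>2 = (t * x\<^sup>2 - y\<^sup>2)\<^sup>2 / (2 * t)"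
    using assms by (simp add: power2_eq_square power4_eq_xxxx field_simps)
  then show ?thesis
    using assms by (metis diff_ge_0_iff_ge divide_nonneg_pos zero_le_power2 zero_less_mult_iff
        zero_less_numeral)
qed

lemma integrable_abs_le:
  fixes f g :: "'a \<Rightarrow> real"
  assumes "integrable M f" "g \<in> borel_measurable M" "\<And>x. x \<in> space M \<Longrightarrow> \<bar>g x\<bar> \<le> f x"
  shows "integrable M g"
  using assms by (intro Bochner_Integration.integrable_bound[OF assms(1,2)] AE_I2) force

lemma integrable_mult_if_square_integrable:
  fixes X Y :: "'a \<Rightarrow> real"
  assumes "X \<in> borel_measurable M" "Y \<in> borel_measurable M"
    and "integrable M (\<lambda>x. (X x)\<^sup>2)" "integrable M (\<lambda>x. (Y x)\<^sup>2)"
  shows "integrable M (\<lambda>x. X x * Y x)"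
proof (rule integrable_abs_le)
  show "integrable M (\<lambda>x. (X x)\<^sup>2 + (Y x)\<^sup>2)" using assms by simp
  show "\<bar>X x * Y x\<bar> \<le> (X x)\<^sup>2 + (Y x)\<^sup>2" for x by (rule abs_mult_le_sq_add_sq)
qed (use assms in simp)

definition kurtosis_le :: "'a measure \<Rightarrow> real \<Rightarrow> ('a \<Rightarrow> real) \<Rightarrow> bool" where
  "kurtosis_le M C Y \<longleftrightarrow> Y \<in> borel_measurable M \<and> integrable M (\<lambda>x. (Y x)^4) \<and>
     integral\<^sup>L M (\<lambda>x. (Y x)^4) \<le> C * (integral\<^sup>L M (\<lambda>x. (Y x)\<^sup>2))\<^sup>2"

context prob_space
begin

lemma integrable_square_if_fourth:
  fixes Y :: "'a \<Rightarrow> real"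
  assumes "Y \<in> borel_measurable M" "integrable M (\<lambda>x. (Y x)^4)"
  shows "integrable M (\<lambda>x. (Y x)\<^sup>2)"
proof (rule square_integrable_imp_integrable)
  show "integrable M (\<lambda>x. ((Y x)\<^sup>2)\<^sup>2)" using assms(2) by (simp flip: power_mult)
qed (use assms(1) in simp)

lemma integrable_sq_mult_sq:
  fixes X Y :: "'a \<Rightarrow> real"
  assumes "kurtosis_le M C X" "kurtosis_le M C Y"
  shows "integrable M (\<lambda>x. (X x)\<^sup>2 * (Y x)\<^sup>2)"
  using assms unfolding kurtosis_le_def
  by (intro integrable_mult_if_square_integrable) (auto intro: integrable_square_if_fourth)

lemma expectation_sq_mult_sq_eq_0:
  fixes X :: "'a \<Rightarrow> real"
  assumes "kurtosis_le M C X" "expectation (\<lambda>x. (X x)\<^sup>2) = 0"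
  shows "expectation (\<lambda>x. (X x)\<^sup>2 * (Y x)\<^sup>2) = 0"
proof -
  have int: "integrable M (\<lambda>x. (X x)^4)" and "expectation (\<lambda>x. (X x)^4) \<le> 0"
    using assms unfolding kurtosis_le_def by simp_all
  moreover have "0 \<le> expectation (\<lambda>x. (X x)^4)"
    by (rule integral_nonneg_AE) (simp add: AE_I2 zero_le_even_power)
  ultimately have "AE x in M. (X x)^4 = 0"
    using integral_nonneg_eq_0_iff_AE[OF int] by (simp add: AE_I2)
  then have "AE x in M. (X x)\<^sup>2 * (Y x)\<^sup>2 = 0" by eventually_elim simp
  then show ?thesis by (rule integral_eq_zero_AE)
qed

text \<open>Weighted AM-GM, with the weight t chosen to balance both sides, replaces Cauchy-Schwarz.\<close>
lemma expectation_sq_mult_sq_le: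
  fixes X Y :: "'a \<Rightarrow> real"
  assumes X: "kurtosis_le M C X" and Y: "kurtosis_le M C Y" and C: "C \<ge> 0"
  shows "expectation (\<lambda>x. (X x)\<^sup>2 * (Y x)\<^sup>2)
    \<le> C * expectation (\<lambda>x. (X x)\<^sup>2) * expectation (\<lambda>x. (Y x)\<^sup>2)"
proof -
  define a where "a = expectation (\<lambda>x. (X x)\<^sup>2)"
  define b where "b = expectation (\<lambda>x. (Y x)\<^sup>2)"
  have "a \<ge> 0" "b \<ge> 0" unfolding a_def b_def by (simp_all add: integral_nonneg_AE)
  consider "a = 0" | "b = 0" | "a > 0" "b > 0" by (metis \<open>a \<ge> 0\<close> \<open>b \<ge> 0\<close> less_eq_real_def)
  then show ?thesis
  proof cases
    case 1
    then show ?thesis using expectation_sq_mult_sq_eq_0[OF X] unfolding a_def by simp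
  next
    case 2
    then show ?thesis using expectation_sq_mult_sq_eq_0[OF Y, of X] unfolding b_def
      by (simp add: mult.commute)
  next
    case 3
    define t where "t = b / a"
    have "t > 0" unfolding t_def using 3 by simp
    have "expectation (\<lambda>x. (X x)\<^sup>2 * (Y x)\<^sup>2) \<le> expectation (\<lambda>x. (t * (X x)^4 + (Y x)^4 / t) / 2)"
      using X Y \<open>t > 0\<close> unfolding kurtosis_le_def
      by (intro integral_mono integrable_sq_mult_sq[OF X Y] sq_mult_sq_le_weighted) auto
    also have "\<dots> = (t * expectation (\<lambda>x. (X x)^4) + expectation (\<lambda>x. (Y x)^4) / t) / 2"
      using X Y unfolding kurtosis_le_def by simp
    also have "\<dots> \<le> (t * (C * a\<^sup>2) + (C * b\<^sup>2) / t) / 2"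
      using X Y \<open>t > 0\<close> unfolding kurtosis_le_def a_def b_def
      by (intro divide_right_mono add_mono mult_left_mono) auto
    also have "\<dots> = C * a * b" unfolding t_def using 3 by (simp add: field_simps power2_eq_square)
    finally show ?thesis unfolding a_def b_def .
  qed
qed

lemma sum_squares_second_moment_le:
  fixes Y :: "nat \<Rightarrow> 'a \<Rightarrow> real"
  assumes Y: "\<And>k. k < n \<Longrightarrow> kurtosis_le M C (Y k)" and C: "C \<ge> 0"
  shows "integrable M (\<lambda>x. (\<Sum>k<n. (Y k x)\<^sup>2)\<^sup>2)"
    and "expectation (\<lambda>x. (\<Sum>k<n. (Y k x)\<^sup>2)\<^sup>2) \<le> C * (expectation (\<lambda>x. \<Sum>k<n. (Y k x)\<^sup>2))\<^sup>2"
proof -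
  have sq: "(\<Sum>k<n. (Y k x)\<^sup>2)\<^sup>2 = (\<Sum>k<n. \<Sum>l<n. (Y k x)\<^sup>2 * (Y l x)\<^sup>2)" for x
    by (simp add: power2_eq_square sum_product)
  have int2: "integrable M (\<lambda>x. (Y k x)\<^sup>2)" if "k < n" for k
    using Y[OF that] unfolding kurtosis_le_def by (simp add: integrable_square_if_fourth)
  have int4: "integrable M (\<lambda>x. (Y k x)\<^sup>2 * (Y l x)\<^sup>2)" if "k < n" "l < n" for k l
    using integrable_sq_mult_sq Y that by blast
  show "integrable M (\<lambda>x. (\<Sum>k<n. (Y k x)\<^sup>2)\<^sup>2)"
    unfolding sq by (intro Bochner_Integration.integrable_sum) (simp add: int4)
  have "expectation (\<lambda>x. (\<Sum>k<n. (Y k x)\<^sup>2)\<^sup>2)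
      = (\<Sum>k<n. \<Sum>l<n. expectation (\<lambda>x. (Y k x)\<^sup>2 * (Y l x)\<^sup>2))"
    unfolding sq using int4
    by (subst Bochner_Integration.integral_sum)
      (auto intro!: sum.cong Bochner_Integration.integral_sum Bochner_Integration.integrable_sum)
  also have "\<dots> \<le> (\<Sum>k<n. \<Sum>l<n. C * expectation (\<lambda>x. (Y k x)\<^sup>2) * expectation (\<lambda>x. (Y l x)\<^sup>2))"
    using Y C by (intro sum_mono expectation_sq_mult_sq_le) auto
  also have "\<dots> = C * (expectation (\<lambda>x. \<Sum>k<n. (Y k x)\<^sup>2))\<^sup>2"
    using int2 by (simp add: Bochner_Integration.integral_sum power2_eq_square sum_product
        sum_distrib_left mult_ac)
  finally show "expectation (\<lambda>x. (\<Sum>k<n. (Y k x)\<^sup>2)\<^sup>2) \<le> C * (expectation (\<lambda>x. \<Sum>k<n. (Y k x)\<^sup>2))\<^sup>2" .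
qed

lemma kurtosis_le_normal:
  assumes s: "0 < \<sigma>" and D: "distributed M lborel Y (\<lambda>x. ennreal (normal_density 0 \<sigma> x))"
  shows "kurtosis_le M 3 Y"
proof -
  have "integrable lborel (\<lambda>x. normal_density 0 \<sigma> x * x ^ 4)"
    using integrable_normal_moment[of \<sigma> 0 4] s by simp
  then have int: "integrable M (\<lambda>x. (Y x)^4)"
    using distributed_integrable[OF D, of "\<lambda>x. x^4"] by simp
  have "expectation (\<lambda>x. (Y x)^4) = (\<integral>x. normal_density 0 \<sigma> x * x^(2*2) \<partial>lborel)"
    using distributed_integral[OF D, of "\<lambda>x. x^4"] by simp
  also have "\<dots> = fact (2 * 2) / ((2 / \<sigma>\<^sup>2)^2 * fact 2)"
    using has_bochner_integral_integral_eq[OF normal_moment_even[OF s, of 0 2]] by simp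
  also have "\<dots> = 3 * (\<sigma>\<^sup>2)\<^sup>2"
    using s by (simp add: fact_numeral field_simps power2_eq_square)
  finally have e4: "expectation (\<lambda>x. (Y x)^4) = 3 * (\<sigma>\<^sup>2)\<^sup>2" .
  have "expectation (\<lambda>x. (Y x)\<^sup>2) = (\<integral>x. normal_density 0 \<sigma> x * x^(2*1) \<partial>lborel)"
    using distributed_integral[OF D, of "\<lambda>x. x^2"] by simp
  also have "\<dots> = fact (2 * 1) / ((2 / \<sigma>\<^sup>2)^1 * fact 1)"
    using has_bochner_integral_integral_eq[OF normal_moment_even[OF s, of 0 1]] by simp
  also have "\<dots> = \<sigma>\<^sup>2" using s by (simp add: field_simps)
  finally have e2: "expectation (\<lambda>x. (Y x)\<^sup>2) = \<sigma>\<^sup>2" .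
  have "Y \<in> borel_measurable M"
    using distributed_measurable[OF D] by simp
  then show ?thesis unfolding kurtosis_le_def e4 e2 using int by simp
qed

lemma kurtosis_le_AE_zero:
  assumes "AE x in M. Y x = 0" "Y \<in> borel_measurable M"
  shows "kurtosis_le M C Y"
proof -
  have "AE x in M. (Y x)^4 = 0" using assms(1) by eventually_elim simp
  moreover have "AE x in M. (Y x)\<^sup>2 = 0" using assms(1) by eventually_elim simp
  ultimately show ?thesis
    using assms(2) unfolding kurtosis_le_def
    by (auto simp: integral_eq_zero_AE intro: integrable_cong_AE_imp[where g="\<lambda>_. 0"])
qed

lemma mvnormal_kurtosis_le:
  assumes "mvnormal M p X D" and meas: "\<And>i. i < p \<Longrightarrow> X i \<in> borel_measurable M"
  shows "kurtosis_le M 3 (\<lambda>\<omega>. \<Sum>i<p. a i * X i \<omega>)"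
proof (cases "qform p D a > 0")
  case True
  then show ?thesis
    using assms(1) kurtosis_le_normal[of "sqrt (qform p D a)"] unfolding mvnormal_def by simp
next
  case False
  then show ?thesis
    using assms(1) meas unfolding mvnormal_def
    by (intro kurtosis_le_AE_zero) (auto intro!: borel_measurable_sum)
qed

end

lemma W2_of_sum_squares:
  fixes M :: "nat \<Rightarrow> 'a measure" and Q :: "nat \<Rightarrow> 'a \<Rightarrow> real"
  assumes prob: "\<And>p. prob_space (M p)" and C: "C \<ge> 0"
    and sum_sq: "\<forall>\<^sub>F p in sequentially. \<exists>Y. Q p = (\<lambda>x. \<Sum>k<p. (Y k x)\<^sup>2) \<and>
        (\<forall>k<p. kurtosis_le (M p) C (Y k))"
    and W1: "W1 M Q"
  shows "W2 M Q"
proof -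
  define m where "m = (\<lambda>p. integral\<^sup>L (M p) (Q p))"
  define v where "v = (\<lambda>p. integral\<^sup>L (M p) (\<lambda>x. (Q p x - m p)\<^sup>2))"
  have moments: "integrable (M p) (\<lambda>x. (Q p x)\<^sup>2) \<and> 0 \<le> v p \<and> v p \<le> C * (m p)\<^sup>2"
    if Q: "Q p = (\<lambda>x. \<Sum>k<p. (Y k x)\<^sup>2)" and Y: "\<forall>k<p. kurtosis_le (M p) C (Y k)" for p Y
  proof -
    interpret prob_space "M p" by (rule prob)
    have int2: "integrable (M p) (\<lambda>x. (Q p x)\<^sup>2)"
      and le: "expectation (\<lambda>x. (Q p x)\<^sup>2) \<le> C * (m p)\<^sup>2"
      using sum_squares_second_moment_le[where n=p and Y=Y and C=C] Y C unfolding Q m_def by auto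
    have "integrable (M p) (Q p)"
      using Y unfolding Q kurtosis_le_def
      by (auto intro!: Bochner_Integration.integrable_sum integrable_square_if_fourth)
    then have "v p = expectation (\<lambda>x. (Q p x)\<^sup>2) - (m p)\<^sup>2"
      unfolding v_def m_def using variance_eq int2 by blast
    moreover have "0 \<le> v p" unfolding v_def by (simp add: integral_nonneg_AE)
    ultimately show ?thesis using int2 le zero_le_power2[of "m p"] by linarith
  qed
  have ev: "\<forall>\<^sub>F p in sequentially. integrable (M p) (\<lambda>x. (Q p x)\<^sup>2) \<and> 0 \<le> v p \<and> v p \<le> C * (m p)\<^sup>2"
    using sum_sq by eventually_elim (use moments in blast)
  have "v \<in> O(\<lambda>p. (m p)\<^sup>2)"
    by (rule bigoI[where c=C]) (use ev in \<open>eventually_elim, auto\<close>)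
  also have "(\<lambda>p. (m p)\<^sup>2) \<in> O(\<lambda>p. (real p)\<^sup>2)"
    using landau_o.big_power[of m, OF W1[unfolded W1_def m_def[symmetric]]] .
  finally have "v \<in> O(\<lambda>p. (real p)\<^sup>2)" .
  moreover have "\<forall>\<^sub>F p in sequentially. integrable (M p) (\<lambda>x. (Q p x)\<^sup>2)"
    using ev by eventually_elim simp
  ultimately show ?thesis unfolding W2_def v_def m_def by blast
qed

section \<open>Fourth moments of linear combinations\<close>

definition odd_moments_vanish :: "'a measure \<Rightarrow> nat \<Rightarrow> (nat \<Rightarrow> 'a \<Rightarrow> real) \<Rightarrow> bool" where
  "odd_moments_vanish M p e \<longleftrightarrow> (\<forall>x<p. \<forall>j<p. \<forall>k<p. \<forall>l<p. x \<noteq> j \<and> x \<noteq> k \<and> x \<noteq> l \<longrightarrow>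
     integral\<^sup>L M (\<lambda>\<omega>. e x \<omega> * e j \<omega> * e k \<omega> * e l \<omega>) = 0)"

definition pairing_weight :: "(nat \<Rightarrow> real) \<Rightarrow> nat \<Rightarrow> nat \<Rightarrow> nat \<Rightarrow> nat \<Rightarrow> real" where
  "pairing_weight w i j k l =
     (if i = j then if k = l then (w j)\<^sup>2 * (w l)\<^sup>2 else 0 else 0) +
     (if i = k then if j = l then (w k)\<^sup>2 * (w l)\<^sup>2 else 0 else 0) +
     (if i = l then if j = k then (w l)\<^sup>2 * (w k)\<^sup>2 else 0 else 0)"

lemma pairing_weight_nonneg: "pairing_weight w i j k l \<ge> 0"
  unfolding pairing_weight_def by simp

lemma pairing_weight_ge:
  shows "(w j)\<^sup>2 * (w l)\<^sup>2 \<le> pairing_weight w j j l l"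
    and "(w k)\<^sup>2 * (w l)\<^sup>2 \<le> pairing_weight w k l k l"
    and "(w l)\<^sup>2 * (w k)\<^sup>2 \<le> pairing_weight w l k k l"
  unfolding pairing_weight_def by simp_all

lemma sum_pairing_weight:
  "(\<Sum>l<p. \<Sum>k<p. \<Sum>j<p. \<Sum>i<p. pairing_weight w i j k l) = 3 * (\<Sum>i<p. (w i)\<^sup>2)\<^sup>2"
proof -
  have square: "(\<Sum>i<p. (w i)\<^sup>2)\<^sup>2 = (\<Sum>l<p. \<Sum>k<p. (w k)\<^sup>2 * (w l)\<^sup>2)"
    by (simp add: power2_eq_square[of "sum _ _"] sum_product mult.commute)
  have "(\<Sum>l<p. \<Sum>k<p. \<Sum>j<p. \<Sum>i<p. if i = j then if k = l then (w j)\<^sup>2 * (w l)\<^sup>2 else 0 else 0)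
      = (\<Sum>l<p. \<Sum>k<p. \<Sum>j<p. if k = l then (w j)\<^sup>2 * (w l)\<^sup>2 else 0)"
    by (intro sum.cong refl) simp
  also have "\<dots> = (\<Sum>l<p. \<Sum>j<p. (w j)\<^sup>2 * (w l)\<^sup>2)"
    by (rule sum.cong[OF refl], subst sum.swap) simp
  also have "\<dots> = (\<Sum>i<p. (w i)\<^sup>2)\<^sup>2"
    unfolding square by (rule sum.cong[OF refl]) simp
  finally have 1: "(\<Sum>l<p. \<Sum>k<p. \<Sum>j<p. \<Sum>i<p.
      if i = j then if k = l then (w j)\<^sup>2 * (w l)\<^sup>2 else 0 else 0) = (\<Sum>i<p. (w i)\<^sup>2)\<^sup>2" .
  have 2: "(\<Sum>l<p. \<Sum>k<p. \<Sum>j<p. \<Sum>i<p.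
      if i = k then if j = l then (w k)\<^sup>2 * (w l)\<^sup>2 else 0 else 0) = (\<Sum>i<p. (w i)\<^sup>2)\<^sup>2"
    unfolding square by (intro sum.cong refl) simp
  have 3: "(\<Sum>l<p. \<Sum>k<p. \<Sum>j<p. \<Sum>i<p.
      if i = l then if j = k then (w l)\<^sup>2 * (w k)\<^sup>2 else 0 else 0) = (\<Sum>i<p. (w i)\<^sup>2)\<^sup>2"
    unfolding square by (intro sum.cong refl) (simp add: mult.commute)
  show ?thesis unfolding pairing_weight_def sum.distrib 1 2 3 by simp
qed

lemma fourth_bounded_mono: "fourth_bounded M p e \<phi> \<Longrightarrow> \<phi> \<le> \<psi> \<Longrightarrow> fourth_bounded M p e \<psi>"
  unfolding fourth_bounded_def by force

lemma eventually_fourth_bounded_nonneg: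
  assumes "\<exists>\<phi>. \<forall>\<^sub>F p in F. fourth_bounded (M p) p (e p) \<phi>"
  obtains \<phi> where "\<phi> \<ge> 0" "\<forall>\<^sub>F p in F. fourth_bounded (M p) p (e p) \<phi>"
proof -
  obtain \<phi> where "\<forall>\<^sub>F p in F. fourth_bounded (M p) p (e p) \<phi>" using assms by blast
  then have "\<forall>\<^sub>F p in F. fourth_bounded (M p) p (e p) (max \<phi> 0)"
    by eventually_elim (erule fourth_bounded_mono, simp)
  then show ?thesis using that[of "max \<phi> 0"] by simp
qed

context prob_space
begin

lemma expectation_sum4:
  assumes "\<And>i j k l. i < n \<Longrightarrow> j < n \<Longrightarrow> k < n \<Longrightarrow> l < n \<Longrightarrow> integrable M (F i j k l)"
  shows "expectation (\<lambda>\<omega>. \<Sum>l<n. \<Sum>k<n. \<Sum>j<n. \<Sum>i<n. F i j k l \<omega>)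
    = (\<Sum>l<n. \<Sum>k<n. \<Sum>j<n. \<Sum>i<n. expectation (F i j k l))"
  using assms
  by (subst Bochner_Integration.integral_sum, (intro Bochner_Integration.integrable_sum; simp)+,
      intro sum.cong refl)+ simp

lemma expectation_sum2:
  assumes "\<And>i j. i < n \<Longrightarrow> j < n \<Longrightarrow> integrable M (F i j)"
  shows "expectation (\<lambda>\<omega>. \<Sum>i<n. \<Sum>j<n. F i j \<omega>) = (\<Sum>i<n. \<Sum>j<n. expectation (F i j))"
  using assms
  by (subst Bochner_Integration.integral_sum, (intro Bochner_Integration.integrable_sum; simp)+,
      intro sum.cong refl)+ simp

lemma sign_symmetric_odd_moments_vanish:
  assumes meas: "\<And>i. i < p \<Longrightarrow> e i \<in> borel_measurable M" and sym: "sign_symmetric M p e"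
  shows "odd_moments_vanish M p e"
  unfolding odd_moments_vanish_def
proof (intro allI impI, elim conjE)
  fix x j k l assume idx: "x < p" "j < p" "k < p" "l < p" "x \<noteq> j" "x \<noteq> k" "x \<noteq> l"
  define N where "N = PiM {..<p} (\<lambda>_. borel::real measure)"
  define g where "g f = f x * f j * f k * f l" for f :: "nat \<Rightarrow> real"
  define T where "T = (\<lambda>\<omega>. \<lambda>i\<in>{..<p}. e i \<omega>)"
  define T' where "T' = (\<lambda>\<omega>. \<lambda>i\<in>{..<p}. if i = x then - e i \<omega> else e i \<omega>)"
  have g: "g \<in> borel_measurable N"
    unfolding g_def N_def using idx by (auto intro!: borel_measurable_times measurable_component_singleton)
  have "T \<in> measurable M N" "T' \<in> measurable M N"
    unfolding T_def T'_def N_def using meas by (auto intro!: measurable_restrict)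
  moreover have "distr M N T = distr M N T'"
    using sym idx(1) unfolding sign_symmetric_def N_def T_def T'_def by blast
  ultimately have "(\<integral>\<omega>. g (T \<omega>) \<partial>M) = (\<integral>\<omega>. g (T' \<omega>) \<partial>M)"
    using integral_distr[OF _ g] by metis
  moreover have "g (T \<omega>) = e x \<omega> * e j \<omega> * e k \<omega> * e l \<omega>"
    and "g (T' \<omega>) = - (e x \<omega> * e j \<omega> * e k \<omega> * e l \<omega>)" for \<omega>
    unfolding g_def T_def T'_def using idx by simp_all
  ultimately show "expectation (\<lambda>\<omega>. e x \<omega> * e j \<omega> * e k \<omega> * e l \<omega>) = 0" by simp
qed

lemma fourth_bounded_integrable_square:
  assumes "fourth_bounded M p e \<phi>" "e i \<in> borel_measurable M" "i < p"
  shows "integrable M (\<lambda>\<omega>. (e i \<omega>)\<^sup>2)"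
proof (rule square_integrable_imp_integrable)
  have "integrable M (\<lambda>\<omega>. (e i \<omega>)\<^sup>2 * (e i \<omega>)\<^sup>2)"
    using assms unfolding fourth_bounded_def by blast
  then show "integrable M (\<lambda>\<omega>. ((e i \<omega>)\<^sup>2)\<^sup>2)"
    by (simp only: power2_eq_square[of "(e i _)\<^sup>2", symmetric])
qed (use assms in simp)

lemma fourth_bounded_integrable_prod3:
  assumes fb: "fourth_bounded M p e \<phi>" and meas: "\<And>i. i < p \<Longrightarrow> e i \<in> borel_measurable M"
    and "j < p" "k < p" "l < p"
  shows "integrable M (\<lambda>\<omega>. e j \<omega> * e k \<omega> * e l \<omega>)"
proof (rule integrable_abs_le)
  show "integrable M (\<lambda>\<omega>. (e j \<omega>)\<^sup>2 * (e k \<omega>)\<^sup>2 + (e l \<omega>)\<^sup>2)"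
    using assms fourth_bounded_integrable_square[OF fb meas] unfolding fourth_bounded_def by simp
  show "\<bar>e j \<omega> * e k \<omega> * e l \<omega>\<bar> \<le> (e j \<omega>)\<^sup>2 * (e k \<omega>)\<^sup>2 + (e l \<omega>)\<^sup>2" for \<omega>
    using abs_mult_le_sq_add_sq[of "e j \<omega> * e k \<omega>" "e l \<omega>"] by (simp add: power_mult_distrib)
qed (use assms in simp)

lemma fourth_bounded_integrable_prod4:
  assumes fb: "fourth_bounded M p e \<phi>" and meas: "\<And>i. i < p \<Longrightarrow> e i \<in> borel_measurable M"
    and "i < p" "j < p" "k < p" "l < p"
  shows "integrable M (\<lambda>\<omega>. e i \<omega> * e j \<omega> * e k \<omega> * e l \<omega>)"
proof (rule integrable_abs_le)
  show "integrable M (\<lambda>\<omega>. (e i \<omega>)\<^sup>2 * (e j \<omega>)\<^sup>2 + (e k \<omega>)\<^sup>2 * (e l \<omega>)\<^sup>2)"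
    using assms unfolding fourth_bounded_def by simp
  show "\<bar>e i \<omega> * e j \<omega> * e k \<omega> * e l \<omega>\<bar> \<le> (e i \<omega>)\<^sup>2 * (e j \<omega>)\<^sup>2 + (e k \<omega>)\<^sup>2 * (e l \<omega>)\<^sup>2" for \<omega>
    using abs_mult_le_sq_add_sq[of "e i \<omega> * e j \<omega>" "e k \<omega> * e l \<omega>"]
    by (simp add: power_mult_distrib mult.assoc)
qed (use assms in simp)

lemma indep_odd_moments_vanish:
  assumes ind: "indep_vars (\<lambda>_. borel) e {..<p}" and fb: "fourth_bounded M p e \<phi>"
    and mean0: "\<And>i. i < p \<Longrightarrow> integrable M (e i) \<and> expectation (e i) = 0"
  shows "odd_moments_vanish M p e"
  unfolding odd_moments_vanish_def
proof (intro allI impI, elim conjE)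
  fix x j k l assume idx: "x < p" "j < p" "k < p" "l < p" "x \<noteq> j" "x \<noteq> k" "x \<noteq> l"
  have meas: "\<And>i. i < p \<Longrightarrow> e i \<in> borel_measurable M"
    using ind unfolding indep_vars_def2 measurable_def by auto
  have "indep_var (PiM {x} (\<lambda>_. borel)) (\<lambda>\<omega>. restrict (\<lambda>i. e i \<omega>) {x})
                  (PiM {j,k,l} (\<lambda>_. borel)) (\<lambda>\<omega>. restrict (\<lambda>i. e i \<omega>) {j,k,l})"
    by (rule indep_var_restrict[OF ind]) (use idx in auto)
  then have "indep_var borel ((\<lambda>f. f x) \<circ> (\<lambda>\<omega>. restrict (\<lambda>i. e i \<omega>) {x}))
                  borel ((\<lambda>f. f j * f k * f l) \<circ> (\<lambda>\<omega>. restrict (\<lambda>i. e i \<omega>) {j,k,l}))"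
    by (rule indep_var_compose) measurable
  then have "indep_var borel (e x) borel (\<lambda>\<omega>. e j \<omega> * e k \<omega> * e l \<omega>)"
    by (simp add: comp_def)
  then have "expectation (\<lambda>\<omega>. e x \<omega> * (e j \<omega> * e k \<omega> * e l \<omega>))
      = expectation (e x) * expectation (\<lambda>\<omega>. e j \<omega> * e k \<omega> * e l \<omega>)"
    using mean0[OF idx(1)] fourth_bounded_integrable_prod3[OF fb meas idx(2-4)]
    by (intro indep_var_lebesgue_integral) auto
  then show "expectation (\<lambda>\<omega>. e x \<omega> * e j \<omega> * e k \<omega> * e l \<omega>) = 0"
    using mean0[OF idx(1)] by (simp add: mult.assoc)
qed

lemma odd_moments_vanish_unpaired:
  assumes odd: "odd_moments_vanish M p e" and idx: "i < p" "j < p" "k < p" "l < p"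
    and "\<not> (i = j \<and> k = l)" "\<not> (i = k \<and> j = l)" "\<not> (i = l \<and> j = k)"
  shows "expectation (\<lambda>\<omega>. e i \<omega> * e j \<omega> * e k \<omega> * e l \<omega>) = 0"
proof -
  have vanish: "expectation (\<lambda>\<omega>. e x \<omega> * e a \<omega> * e b \<omega> * e c \<omega>) = 0"
    if "x < p" "a < p" "b < p" "c < p" "x \<noteq> a" "x \<noteq> b" "x \<noteq> c" for x a b c
    using odd that unfolding odd_moments_vanish_def by blast
  consider "i \<noteq> j" "i \<noteq> k" "i \<noteq> l" | "j \<noteq> i" "j \<noteq> k" "j \<noteq> l"
    | "k \<noteq> i" "k \<noteq> j" "k \<noteq> l" | "l \<noteq> i" "l \<noteq> j" "l \<noteq> k"
    using assms(6-8) by blast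
  then show ?thesis
  proof cases
    case 1
    then show ?thesis using vanish[of i j k l] idx by simp
  next
    case 2
    then show ?thesis using vanish[of j i k l] idx by (simp add: mult_ac)
  next
    case 3
    then show ?thesis using vanish[of k i j l] idx by (simp add: mult_ac)
  next
    case 4
    then show ?thesis using vanish[of l i j k] idx by (simp add: mult_ac)
  qed
qed

lemma quartic_moment_le_pairing_weight:
  assumes fb: "fourth_bounded M p e \<phi>" and "\<phi> \<ge> 0" and odd: "odd_moments_vanish M p e"
    and idx: "i < p" "j < p" "k < p" "l < p"
  shows "w i * w j * w k * w l * expectation (\<lambda>\<omega>. e i \<omega> * e j \<omega> * e k \<omega> * e l \<omega>)
    \<le> \<phi> * pairing_weight w i j k l"
proof -
  have paired: "(w a)\<^sup>2 * (w b)\<^sup>2 * expectation (\<lambda>\<omega>. (e a \<omega>)\<^sup>2 * (e b \<omega>)\<^sup>2) \<le> \<phi> * c"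
    if "a < p" "b < p" "(w a)\<^sup>2 * (w b)\<^sup>2 \<le> c" for a b c
  proof -
    have "expectation (\<lambda>\<omega>. (e a \<omega>)\<^sup>2 * (e b \<omega>)\<^sup>2) \<le> \<phi>"
      using fb that(1,2) unfolding fourth_bounded_def by blast
    then have "(w a)\<^sup>2 * (w b)\<^sup>2 * expectation (\<lambda>\<omega>. (e a \<omega>)\<^sup>2 * (e b \<omega>)\<^sup>2) \<le> (w a)\<^sup>2 * (w b)\<^sup>2 * \<phi>"
      by (intro mult_left_mono) simp_all
    also have "\<dots> \<le> \<phi> * c"
      using that(3) \<open>\<phi> \<ge> 0\<close> by (simp add: mult.commute mult_left_mono)
    finally show ?thesis .
  qed
  consider "i = j" "k = l" | "i = k" "j = l" | "i = l" "j = k"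
    | "\<not> (i = j \<and> k = l)" "\<not> (i = k \<and> j = l)" "\<not> (i = l \<and> j = k)" by blast
  then show ?thesis
  proof cases
    case 1
    then show ?thesis
      using paired[of j l "pairing_weight w i j k l"] pairing_weight_ge(1)[of w j l] idx
      by (simp add: power2_eq_square mult_ac)
  next
    case 2
    then show ?thesis
      using paired[of k l "pairing_weight w i j k l"] pairing_weight_ge(2)[of w k l] idx
      by (simp add: power2_eq_square mult_ac)
  next
    case 3
    then show ?thesis
      using paired[of l k "pairing_weight w i j k l"] pairing_weight_ge(3)[of w l k] idx
      by (simp add: power2_eq_square mult_ac)
  next
    case 4
    then show ?thesis
      using odd_moments_vanish_unpaired[OF odd idx] pairing_weight_nonneg \<open>\<phi> \<ge> 0\<close> by simp
  qed
qed

lemma expectation_square_linear_combination: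
  fixes e :: "nat \<Rightarrow> 'a \<Rightarrow> real"
  assumes meas: "\<And>i. i < p \<Longrightarrow> e i \<in> borel_measurable M"
    and sq: "\<And>i. i < p \<Longrightarrow> integrable M (\<lambda>\<omega>. (e i \<omega>)\<^sup>2)"
  shows "expectation (\<lambda>\<omega>. (\<Sum>m<p. w m * e m \<omega>)\<^sup>2)
    = (\<Sum>i<p. \<Sum>j<p. w i * w j * expectation (\<lambda>\<omega>. e i \<omega> * e j \<omega>))"
proof -
  have expand: "(\<Sum>m<p. w m * e m \<omega>)\<^sup>2 = (\<Sum>i<p. \<Sum>j<p. w i * w j * (e i \<omega> * e j \<omega>))" for \<omega>
    unfolding power2_eq_square sum_product by (simp add: mult_ac)
  have "integrable M (\<lambda>\<omega>. e i \<omega> * e j \<omega>)" if "i < p" "j < p" for i j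
    using that meas sq by (intro integrable_mult_if_square_integrable)
  then show ?thesis
    unfolding expand by (subst expectation_sum2) auto
qed

text \<open>The fourth moment of a linear combination expands into a sum over index quadruples,
  in which only the three ways of pairing the indices survive.\<close>
lemma kurtosis_le_linear_combination:
  assumes meas: "\<And>i. i < p \<Longrightarrow> e i \<in> borel_measurable M"
    and fb: "fourth_bounded M p e \<phi>" and "\<phi> \<ge> 0" and odd: "odd_moments_vanish M p e"
    and cov: "\<And>i j. i < p \<Longrightarrow> j < p \<Longrightarrow> expectation (\<lambda>\<omega>. e i \<omega> * e j \<omega>) = (if i = j then 1 else 0)"
  shows "kurtosis_le M (3 * \<phi>) (\<lambda>\<omega>. \<Sum>m<p. w m * e m \<omega>)"
proof -
  have int4: "integrable M (\<lambda>\<omega>. e i \<omega> * e j \<omega> * e k \<omega> * e l \<omega>)"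
    if "i < p" "j < p" "k < p" "l < p" for i j k l
    using fourth_bounded_integrable_prod4[OF fb meas that] .
  have expand: "(\<Sum>m<p. w m * e m \<omega>)^4 = (\<Sum>l<p. \<Sum>k<p. \<Sum>j<p. \<Sum>i<p.
      w i * w j * w k * w l * (e i \<omega> * e j \<omega> * e k \<omega> * e l \<omega>))" for \<omega>
    by (simp add: power4_eq_xxxx sum_distrib_left sum_distrib_right mult_ac)
  have int: "integrable M (\<lambda>\<omega>. (\<Sum>m<p. w m * e m \<omega>)^4)"
    unfolding expand by (intro Bochner_Integration.integrable_sum integrable_mult_right int4) auto
  have "expectation (\<lambda>\<omega>. (\<Sum>m<p. w m * e m \<omega>)^4)
      = (\<Sum>l<p. \<Sum>k<p. \<Sum>j<p. \<Sum>i<p.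
          w i * w j * w k * w l * expectation (\<lambda>\<omega>. e i \<omega> * e j \<omega> * e k \<omega> * e l \<omega>))"
    unfolding expand by (subst expectation_sum4) (auto intro: int4)
  also have "\<dots> \<le> (\<Sum>l<p. \<Sum>k<p. \<Sum>j<p. \<Sum>i<p. \<phi> * pairing_weight w i j k l)"
    by (intro sum_mono quartic_moment_le_pairing_weight[OF fb \<open>\<phi> \<ge> 0\<close> odd]) auto
  also have "\<dots> = 3 * \<phi> * (\<Sum>i<p. (w i)\<^sup>2)\<^sup>2"
    by (simp add: sum_distrib_left[symmetric] sum_pairing_weight)
  also have "(\<Sum>i<p. (w i)\<^sup>2) = expectation (\<lambda>\<omega>. (\<Sum>m<p. w m * e m \<omega>)\<^sup>2)"
    using expectation_square_linear_combination
      [OF meas fourth_bounded_integrable_square[OF fb meas]]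
    by (simp add: cov power2_eq_square if_distrib[where f="\<lambda>x. _ * x"] cong: if_cong)
  finally show ?thesis
    unfolding kurtosis_le_def using int meas by (auto intro!: borel_measurable_sum)
qed

end

section \<open>The standardized vector and the three cases\<close>

locale standardization = prob_space M for M :: "'a measure" +
  fixes p :: nat and eps :: "nat \<Rightarrow> 'a \<Rightarrow> real" and D S :: "nat \<Rightarrow> nat \<Rightarrow> real"
  assumes eps_measurable: "\<And>i. i < p \<Longrightarrow> eps i \<in> borel_measurable M"
    and eps_square_integrable: "\<And>i. i < p \<Longrightarrow> integrable M (\<lambda>\<omega>. (eps i \<omega>)\<^sup>2)"
    and eps_mean_zero: "\<And>i. i < p \<Longrightarrow> integrable M (eps i) \<and> expectation (eps i) = 0"
    and cov_eq: "\<And>i j. i < p \<Longrightarrow> j < p \<Longrightarrow> D i j = expectation (\<lambda>\<omega>. eps i \<omega> * eps j \<omega>)"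
    and inv_sqrt: "is_inv_sqrt p D S"
begin

abbreviation e :: "nat \<Rightarrow> 'a \<Rightarrow> real" where "e \<equiv> stdz p S eps"

lemma e_measurable: "i < p \<Longrightarrow> e i \<in> borel_measurable M"
  unfolding stdz_def using eps_measurable by (auto intro!: borel_measurable_sum)

lemma e_cov: "i < p \<Longrightarrow> j < p \<Longrightarrow> expectation (\<lambda>\<omega>. e i \<omega> * e j \<omega>) = (if i = j then 1 else 0)"
proof -
  assume ij: "i < p" "j < p"
  have "expectation (\<lambda>\<omega>. e i \<omega> * e j \<omega>)
      = expectation (\<lambda>\<omega>. \<Sum>a<p. \<Sum>b<p. S i a * S j b * (eps a \<omega> * eps b \<omega>))"
    unfolding stdz_def by (simp add: sum_product mult_ac)
  also have "\<dots> = (\<Sum>a<p. \<Sum>b<p. S i a * S j b * D a b)"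
    using eps_measurable eps_square_integrable
    by (subst expectation_sum2) (auto simp: cov_eq intro: integrable_mult_if_square_integrable)
  also have "\<dots> = (if i = j then 1 else 0)" by (rule inv_sqrt_cov[OF inv_sqrt ij])
  finally show ?thesis .
qed

lemma e_mean_zero: "integrable M (e i) \<and> expectation (e i) = 0"
proof
  show "integrable M (e i)"
    using eps_mean_zero unfolding stdz_def
    by (intro Bochner_Integration.integrable_sum integrable_mult_right) auto
  have "expectation (e i) = (\<Sum>k<p. S i k * expectation (eps k))"
    using eps_mean_zero unfolding stdz_def by (subst Bochner_Integration.integral_sum) auto
  then show "expectation (e i) = 0" using eps_mean_zero by simp
qed

lemma odd_moments_vanish_e:
  assumes "sign_symmetric M p e \<or> indep_vars (\<lambda>_. borel) e {..<p}" and fb: "fourth_bounded M p e \<phi>"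
  shows "odd_moments_vanish M p e"
  using assms(1)
proof
  assume "sign_symmetric M p e"
  with e_measurable show ?thesis by (rule sign_symmetric_odd_moments_vanish)
next
  assume "indep_vars (\<lambda>_. borel) e {..<p}"
  then show ?thesis by (rule indep_odd_moments_vanish[OF _ fb e_mean_zero])
qed

lemma linear_combination_eq_e:
  "(\<Sum>i<p. u i * eps i \<omega>) = (\<Sum>m<p. (\<Sum>i<p. u i * mat_mult p D S i m) * e m \<omega>)"
proof -
  have "(\<Sum>i<p. u i * eps i \<omega>) = (\<Sum>i<p. \<Sum>m<p. u i * mat_mult p D S i m * e m \<omega>)"
    using inv_sqrt_reconstruct[OF inv_sqrt, of _ "\<lambda>j. eps j \<omega>"] unfolding stdz_def
    by (intro sum.cong refl) (simp add: sum_distrib_left mult.assoc)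
  also have "\<dots> = (\<Sum>m<p. (\<Sum>i<p. u i * mat_mult p D S i m) * e m \<omega>)"
    by (subst sum.swap) (simp add: sum_distrib_right)
  finally show ?thesis .
qed

lemma kurtosis_le_e:
  assumes fb: "fourth_bounded M p e \<phi>" and "\<phi> \<ge> 0" and k: "k < p"
  shows "kurtosis_le M \<phi> (e k)"
proof -
  have "(\<lambda>\<omega>. (e k \<omega>)^4) = (\<lambda>\<omega>. (e k \<omega>)\<^sup>2 * (e k \<omega>)\<^sup>2)"
    by (simp add: fun_eq_iff power4_eq_xxxx power2_eq_square)
  moreover have "expectation (\<lambda>\<omega>. (e k \<omega>)\<^sup>2) = 1"
    using e_cov[OF k k] by (simp add: power2_eq_square)
  ultimately show ?thesis
    using fb[unfolded fourth_bounded_def, rule_format, OF k k] e_measurable[OF k]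
    unfolding kurtosis_le_def by simp
qed

lemma expectation_sum_e_squares:
  assumes fb: "fourth_bounded M p e \<phi>"
  shows "expectation (\<lambda>\<omega>. \<Sum>k<p. (e k \<omega>)\<^sup>2) = p"
proof -
  have "expectation (\<lambda>\<omega>. \<Sum>k<p. (e k \<omega>)\<^sup>2) = (\<Sum>k<p. expectation (\<lambda>\<omega>. e k \<omega> * e k \<omega>))"
    using fourth_bounded_integrable_square[OF fb e_measurable]
    by (subst Bochner_Integration.integral_sum) (auto simp: power2_eq_square)
  then show ?thesis by (simp add: e_cov)
qed

lemma qrv_inverse_eq_sum_squares:
  "is_inverse_mat p W D \<Longrightarrow> qrv p W eps = (\<lambda>\<omega>. \<Sum>k<p. (e k \<omega>)\<^sup>2)"
  using qrv_eq_sum_squares[OF inverse_mat_eq_gram_inv_sqrt[OF inv_sqrt]] unfolding stdz_def by simp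

end

lemma W2_mvnormal:
  fixes M :: "nat \<Rightarrow> 'a measure" and eps :: "nat \<Rightarrow> nat \<Rightarrow> 'a \<Rightarrow> real"
  assumes prob: "\<And>p. prob_space (M p)"
    and meas: "\<And>p i. i < p \<Longrightarrow> eps p i \<in> borel_measurable (M p)"
    and psd: "\<And>p. psd_mat p (W p)" and normal: "\<forall>p. mvnormal (M p) p (eps p) (D p)"
    and W1: "W1 M (\<lambda>p. qrv p (W p) (eps p))"
  shows "W2 M (\<lambda>p. qrv p (W p) (eps p))"
proof (rule W2_of_sum_squares[OF prob _ _ W1])
  show "\<forall>\<^sub>F p in sequentially. \<exists>Y. qrv p (W p) (eps p) = (\<lambda>\<omega>. \<Sum>k<p. (Y k \<omega>)\<^sup>2) \<and>
      (\<forall>k<p. kurtosis_le (M p) 3 (Y k))"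
  proof (intro always_eventually allI)
    fix p
    obtain U where "\<forall>i<p. \<forall>j<p. W p i j = (\<Sum>k<p. U k i * U k j)"
      using psd_mat_gram[OF psd] by blast
    then show "\<exists>Y. qrv p (W p) (eps p) = (\<lambda>\<omega>. \<Sum>k<p. (Y k \<omega>)\<^sup>2) \<and> (\<forall>k<p. kurtosis_le (M p) 3 (Y k))"
      using prob_space.mvnormal_kurtosis_le[OF prob normal[rule_format] meas]
      by (intro exI[of _ "\<lambda>k \<omega>. \<Sum>i<p. U k i * eps p i \<omega>"] conjI qrv_eq_sum_squares) simp_all
  qed
qed simp

lemma W2_inverse_covariance:
  fixes M :: "nat \<Rightarrow> 'a measure" and eps :: "nat \<Rightarrow> nat \<Rightarrow> 'a \<Rightarrow> real"
  assumes std: "\<And>p. standardization (M p) p (eps p) (D p) (S p)"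
    and inv: "\<forall>p. is_inverse_mat p (W p) (D p)"
    and bounded: "\<exists>\<phi>. \<forall>\<^sub>F p in sequentially. fourth_bounded (M p) p (stdz p (S p) (eps p)) \<phi>"
  shows "W2 M (\<lambda>p. qrv p (W p) (eps p))"
proof -
  obtain \<phi> where "\<phi> \<ge> 0"
    and fb: "\<forall>\<^sub>F p in sequentially. fourth_bounded (M p) p (stdz p (S p) (eps p)) \<phi>"
    using eventually_fourth_bounded_nonneg[OF bounded] .
  have prob: "\<And>p. prob_space (M p)" using std by (rule standardization.axioms(1))
  have sum_sq: "qrv p (W p) (eps p) = (\<lambda>\<omega>. \<Sum>k<p. (stdz p (S p) (eps p) k \<omega>)\<^sup>2)" for p
    using standardization.qrv_inverse_eq_sum_squares[OF std] inv by blast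
  have "\<forall>\<^sub>F p in sequentially. integral\<^sup>L (M p) (qrv p (W p) (eps p)) = real p"
    using fb by eventually_elim (simp add: sum_sq standardization.expectation_sum_e_squares[OF std])
  then have "W1 M (\<lambda>p. qrv p (W p) (eps p))"
    unfolding W1_def by (intro bigoI[where c=1]) (auto elim: eventually_mono)
  moreover have "\<forall>\<^sub>F p in sequentially. \<exists>Y. qrv p (W p) (eps p) = (\<lambda>\<omega>. \<Sum>k<p. (Y k \<omega>)\<^sup>2) \<and>
      (\<forall>k<p. kurtosis_le (M p) \<phi> (Y k))"
    using fb by eventually_elim
      (use sum_sq standardization.kurtosis_le_e[OF std _ \<open>\<phi> \<ge> 0\<close>] in blast)
  ultimately show ?thesis by (intro W2_of_sum_squares[OF prob \<open>\<phi> \<ge> 0\<close>])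
qed

lemma W2_odd_moments_vanish:
  fixes M :: "nat \<Rightarrow> 'a measure" and eps :: "nat \<Rightarrow> nat \<Rightarrow> 'a \<Rightarrow> real"
  assumes std: "\<And>p. standardization (M p) p (eps p) (D p) (S p)"
    and psd: "\<And>p. psd_mat p (W p)" and "\<phi> \<ge> 0"
    and fb_odd: "\<forall>\<^sub>F p in sequentially. fourth_bounded (M p) p (stdz p (S p) (eps p)) \<phi> \<and>
        odd_moments_vanish (M p) p (stdz p (S p) (eps p))"
    and W1: "W1 M (\<lambda>p. qrv p (W p) (eps p))"
  shows "W2 M (\<lambda>p. qrv p (W p) (eps p))"
proof (rule W2_of_sum_squares[OF _ _ _ W1])
  show "prob_space (M p)" for p using std by (rule standardization.axioms(1))
  show "0 \<le> 3 * \<phi>" using \<open>\<phi> \<ge> 0\<close> by simp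
  show "\<forall>\<^sub>F p in sequentially. \<exists>Y. qrv p (W p) (eps p) = (\<lambda>\<omega>. \<Sum>k<p. (Y k \<omega>)\<^sup>2) \<and>
      (\<forall>k<p. kurtosis_le (M p) (3 * \<phi>) (Y k))"
    using fb_odd
  proof eventually_elim
    case (elim p)
    interpret standardization "M p" p "eps p" "D p" "S p" by (rule std)
    obtain U where "\<forall>i<p. \<forall>j<p. W p i j = (\<Sum>k<p. U k i * U k j)"
      using psd_mat_gram[OF psd] by blast
    moreover have "kurtosis_le (M p) (3 * \<phi>) (\<lambda>\<omega>. \<Sum>i<p. U k i * eps p i \<omega>)" for k
      unfolding linear_combination_eq_e
      using elim \<open>\<phi> \<ge> 0\<close> e_measurable e_cov by (intro kurtosis_le_linear_combination) auto
    ultimately show ?case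
      by (intro exI[of _ "\<lambda>k \<omega>. \<Sum>i<p. U k i * eps p i \<omega>"] conjI qrv_eq_sum_squares) simp_all
  qed
qed

lemma W2_symmetric_or_independent:
  fixes M :: "nat \<Rightarrow> 'a measure" and eps :: "nat \<Rightarrow> nat \<Rightarrow> 'a \<Rightarrow> real"
  assumes std: "\<And>p. standardization (M p) p (eps p) (D p) (S p)" and psd: "\<And>p. psd_mat p (W p)"
    and sym_or_indep: "\<forall>p. sign_symmetric (M p) p (stdz p (S p) (eps p)) \<or>
        prob_space.indep_vars (M p) (\<lambda>_. borel) (stdz p (S p) (eps p)) {..<p}"
    and bounded: "\<exists>\<phi>. \<forall>\<^sub>F p in sequentially. fourth_bounded (M p) p (stdz p (S p) (eps p)) \<phi>"
    and W1: "W1 M (\<lambda>p. qrv p (W p) (eps p))"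
  shows "W2 M (\<lambda>p. qrv p (W p) (eps p))"
proof -
  obtain \<phi> where "\<phi> \<ge> 0"
    and fb: "\<forall>\<^sub>F p in sequentially. fourth_bounded (M p) p (stdz p (S p) (eps p)) \<phi>"
    using eventually_fourth_bounded_nonneg[OF bounded] .
  have "\<forall>\<^sub>F p in sequentially. fourth_bounded (M p) p (stdz p (S p) (eps p)) \<phi> \<and>
      odd_moments_vanish (M p) p (stdz p (S p) (eps p))"
    using fb
    by eventually_elim (use sym_or_indep standardization.odd_moments_vanish_e[OF std] in blast)
  then show ?thesis by (rule W2_odd_moments_vanish[OF std psd \<open>\<phi> \<ge> 0\<close> _ W1])
qed

theorem lemma2:
  fixes M :: "nat \<Rightarrow> 'a measure" and eps :: "nat \<Rightarrow> nat \<Rightarrow> 'a \<Rightarrow> real"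
    and Delta W S :: "nat \<Rightarrow> nat \<Rightarrow> nat \<Rightarrow> real"
  assumes prob: "\<And>p. prob_space (M p)"
    and meas: "\<And>p i. i < p \<Longrightarrow> eps p i \<in> borel_measurable (M p)"
    and sq_int: "\<And>p i. i < p \<Longrightarrow> integrable (M p) (\<lambda>\<omega>. (eps p i \<omega>)\<^sup>2)"
    and mean0: "\<And>p i. i < p \<Longrightarrow> integrable (M p) (eps p i) \<and> integral\<^sup>L (M p) (eps p i) = 0"
    and cov: "\<And>p i j. i < p \<Longrightarrow> j < p \<Longrightarrow>
                Delta p i j = integral\<^sup>L (M p) (\<lambda>\<omega>. eps p i \<omega> * eps p j \<omega>)"
    and Delta_pd: "\<And>p. pd_mat p (Delta p)"
    and W_psd: "\<And>p. psd_mat p (W p)"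
    and S_def: "\<And>p. is_inv_sqrt p (Delta p) (S p)"
  shows
    "((\<forall>p. mvnormal (M p) p (eps p) (Delta p)) \<longrightarrow>
        W1 M (\<lambda>p. qrv p (W p) (eps p)) \<longrightarrow> W2 M (\<lambda>p. qrv p (W p) (eps p))) \<and>
     ((\<forall>p. is_inverse_mat p (W p) (Delta p)) \<longrightarrow>
        (\<exists>phi. \<forall>\<^sub>F p in sequentially. fourth_bounded (M p) p (stdz p (S p) (eps p)) phi) \<longrightarrow>
        W2 M (\<lambda>p. qrv p (W p) (eps p))) \<and>
     ((\<forall>p. sign_symmetric (M p) p (stdz p (S p) (eps p)) \<or>
           prob_space.indep_vars (M p) (\<lambda>_. borel) (stdz p (S p) (eps p)) {..<p}) \<longrightarrow>
        (\<exists>phi. \<forall>\<^sub>F p in sequentially. fourth_bounded (M p) p (stdz p (S p) (eps p)) phi) \<longrightarrow>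
        W1 M (\<lambda>p. qrv p (W p) (eps p)) \<longrightarrow> W2 M (\<lambda>p. qrv p (W p) (eps p)))"
proof -
  have std: "standardization (M p) p (eps p) (Delta p) (S p)" for p
    unfolding standardization_def standardization_axioms_def
    by (intro conjI allI impI) (simp_all add: prob meas sq_int mean0 cov S_def)
  show ?thesis
    using W2_mvnormal[where M=M and eps=eps and D=Delta, OF prob meas W_psd]
      W2_inverse_covariance[OF std] W2_symmetric_or_independent[OF std W_psd] by blast
qed

end
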